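(* Let $R:\ \mu=\rho^{(0)}\to\dots\to\rho^{(l)}=\nu$ be a sequence of diagrams and let $T\in\mathcal{T}(\lambda,R)$. If $$\prod_{\substack{\alpha\in\lambda\\ T(\alpha)\text{ unbarred}}}\Big(a_{T(\alpha)-\rho(\alpha)_{T(\alpha)}}-a_{T(\alpha)-c(\alpha)}\Big)\neq 0,$$ then $T$ is $\nu$-bounded.
   Context: $a=(a_i)_{i\in\mathbb{Z}}$ are independent variables. Partitions are identified with Young diagrams; box $(i,j)$ is in row $i$, column $j$; content $c(\alpha)=j-i$; $\nu'_j$ is the length of column $j$ of $\nu$. A reverse $\lambda$-tableau is a filling $T$ of $\lambda$ by positive integers weakly decreasing along rows and strictly decreasing down columns. $\rho\to\sigma$ means $\sigma$ is obtained from $\rho$ by adding one box; for $R:\ \mu=\rho^{(0)}\to\dots\to\rho^{(l)}=\nu$, $r_i$ is the row of the box added to $\rho^{(i-1)}$. Column order: columns left to right, within a column bottom to top; $\prec$ is strict precedence. $\mathcal{T}(\lambda,R)$ consists of reverse $\lambda$-tableaux $T$ with chosen boxes $\alpha_1\prec\dots\prec\alpha_l$ such that $T(\alpha_i)=r_i$; those entries are barred, the rest unbarred. For $\alpha$ with $\alpha_i\prec\alpha\prec\alpha_{i+1}$ ($0\le i\le l$, conditions with $\alpha_0,\alpha_{l+1}$ void), $\rho(\alpha)=\rho^{(i)}$, and $\rho(\alpha)_k$ is the length of row $k$ of $\rho(\alpha)$. $T$ is $\nu$-bounded if $T(1,j)\le\nu'_j$ for all $j=1,\dots,\lambda_1$.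 *)

theory Defs
  imports Main
begin

text \<open>Partitions are nat lists, weakly decreasing with positive parts.
  Row k (k >= 1) has length lam ! (k - 1). Boxes are pairs (row, column), 1-based.\<close>

definition is_partition :: "nat list \<Rightarrow> bool" where
  "is_partition lam \<longleftrightarrow> sorted_wrt (\<ge>) lam \<and> (\<forall>x\<in>set lam. 0 < x)"

definition rowlen :: "nat list \<Rightarrow> nat \<Rightarrow> nat" where
  "rowlen lam k = (if 1 \<le> k \<and> k \<le> length lam then lam ! (k - 1) else 0)"

definition diagram :: "nat list \<Rightarrow> (nat \<times> nat) set" where
  "diagram lam = {(i, j). 1 \<le> i \<and> 1 \<le> j \<and> j \<le> rowlen lam i}"

definition collen :: "nat list \<Rightarrow> nat \<Rightarrow> nat" where
  "collen lam j = card {i. (i, j) \<in> diagram lam}"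

definition content :: "nat \<times> nat \<Rightarrow> int" where
  "content \<alpha> = int (snd \<alpha>) - int (fst \<alpha>)"

definition adds_box_in_row :: "nat list \<Rightarrow> nat list \<Rightarrow> nat \<Rightarrow> bool" where
  "adds_box_in_row rho sigma k \<longleftrightarrow> 1 \<le> k \<and> rowlen sigma k = rowlen rho k + 1 \<and>
     (\<forall>k'. k' \<noteq> k \<longrightarrow> rowlen sigma k' = rowlen rho k')"

definition adds_box :: "nat list \<Rightarrow> nat list \<Rightarrow> bool" where
  "adds_box rho sigma \<longleftrightarrow> (\<exists>k. adds_box_in_row rho sigma k)"

definition added_row :: "nat list \<Rightarrow> nat list \<Rightarrow> nat" where
  "added_row rho sigma = (THE k. adds_box_in_row rho sigma k)"

text \<open>R : mu = rho^(0) -> ... -> rho^(l) = nu, given as the list [rho^(0), ..., rho^(l)].\<close>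
definition is_box_sequence :: "nat list list \<Rightarrow> nat list \<Rightarrow> nat list \<Rightarrow> bool" where
  "is_box_sequence R mu nu \<longleftrightarrow> R \<noteq> [] \<and> hd R = mu \<and> last R = nu \<and>
     (\<forall>\<rho>\<in>set R. is_partition \<rho>) \<and>
     (\<forall>i. Suc i < length R \<longrightarrow> adds_box (R ! i) (R ! Suc i))"

definition seq_row :: "nat list list \<Rightarrow> nat \<Rightarrow> nat" where
  "seq_row R i = added_row (R ! (i - 1)) (R ! i)"

definition reverse_tableau :: "nat list \<Rightarrow> (nat \<times> nat \<Rightarrow> nat) \<Rightarrow> bool" where
  "reverse_tableau lam T \<longleftrightarrow>
     (\<forall>\<alpha>\<in>diagram lam. 0 < T \<alpha>) \<and>
     (\<forall>i j. (i, j) \<in> diagram lam \<and> (i, Suc j) \<in> diagram lam \<longrightarrow> T (i, Suc j) \<le> T (i, j)) \<and>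
     (\<forall>i j. (i, j) \<in> diagram lam \<and> (Suc i, j) \<in> diagram lam \<longrightarrow> T (Suc i, j) < T (i, j))"

definition col_prec :: "nat \<times> nat \<Rightarrow> nat \<times> nat \<Rightarrow> bool" where
  "col_prec \<alpha> \<beta> \<longleftrightarrow> snd \<alpha> < snd \<beta> \<or> (snd \<alpha> = snd \<beta> \<and> fst \<beta> < fst \<alpha>)"

text \<open>(T, A) in T(lam, R): A = [alpha_1, ..., alpha_l] are the chosen (barred) boxes.\<close>
definition in_TT :: "nat list \<Rightarrow> nat list list \<Rightarrow> (nat \<times> nat \<Rightarrow> nat) \<Rightarrow> (nat \<times> nat) list \<Rightarrow> bool" where
  "in_TT lam R T A \<longleftrightarrow> reverse_tableau lam T \<and> length A + 1 = length R \<and>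
     set A \<subseteq> diagram lam \<and> sorted_wrt col_prec A \<and>
     (\<forall>i. 1 \<le> i \<and> i \<le> length A \<longrightarrow> T (A ! (i - 1)) = seq_row R i)"

definition rho_at :: "nat list list \<Rightarrow> (nat \<times> nat) list \<Rightarrow> nat \<times> nat \<Rightarrow> nat list" where
  "rho_at R A \<alpha> = R ! length (filter (\<lambda>\<beta>. col_prec \<beta> \<alpha>) A)"

definition nu_bounded :: "nat list \<Rightarrow> nat list \<Rightarrow> (nat \<times> nat \<Rightarrow> nat) \<Rightarrow> bool" where
  "nu_bounded nu lam T \<longleftrightarrow> (\<forall>j. 1 \<le> j \<and> j \<le> rowlen lam 1 \<longrightarrow> T (1, j) \<le> collen nu j)"

end

theory Submission
  imports Defs
begin

(* Walk through the boxes of lam in column order.  Before a box alpha the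
   current diagram is rho(alpha) = rho_at R A alpha; right after it (i.e. counting alpha
   itself if it is barred) it is rho_after R A alpha.  We show the growth invariant

      c(alpha) + 1 <= length of row T(alpha) of rho_after R A alpha        (i, j) in lam

   by induction on the column j.  Going from (i,j) to (i,j+1) the diagram can only grow
   and T can only decrease, so row T(i,j+1) of rho(i,j+1) already has length >= c(i,j+1).
   A barred box then adds a box precisely in row T(i,j+1); for an unbarred box the
   nonvanishing factor a_{T - rho_T} - a_{T - c} forbids equality.  For alpha = (1,j) this
   gives j <= (row T(1,j) of nu), and since nu is a partition, column j of nu has at least
   T(1,j) boxes: T is nu-bounded. *)

definition rho_after :: "nat list list \<Rightarrow> (nat \<times> nat) list \<Rightarrow> nat \<times> nat \<Rightarrow> nat list" where
  "rho_after R A \<alpha> = R ! length (filter (\<lambda>\<beta>. col_prec \<beta> \<alpha> \<or> \<beta> = \<alpha>) A)"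

lemma filter_preceding_nth:
  assumes sorted: "sorted_wrt r xs" and p: "p < length xs"
    and irrefl: "\<And>x. \<not> r x x" and asym: "\<And>x y. r x y \<Longrightarrow> \<not> r y x"
  shows "filter (\<lambda>y. r y (xs ! p)) xs = take p xs"
    and "filter (\<lambda>y. r y (xs ! p) \<or> y = xs ! p) xs = take (Suc p) xs"
proof -
  have split: "xs = take p xs @ xs ! p # drop (Suc p) xs"
    using p by (simp add: id_take_nth_drop)
  then have before: "\<forall>y\<in>set (take p xs). r y (xs ! p)"
    and after: "\<forall>y\<in>set (drop (Suc p) xs). r (xs ! p) y"
    using sorted sorted_wrt_append[of r "take p xs" "xs ! p # drop (Suc p) xs"] by auto
  have after_not: "\<not> r y (xs ! p)" "y \<noteq> xs ! p" if "y \<in> set (drop (Suc p) xs)" for y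
    using after that asym irrefl by blast+
  have "filter (\<lambda>y. r y (xs ! p)) (take p xs @ xs ! p # drop (Suc p) xs) = take p xs"
    using before after_not irrefl by (simp add: filter_empty_conv)
  then show "filter (\<lambda>y. r y (xs ! p)) xs = take p xs"
    using split by simp
  have "filter (\<lambda>y. r y (xs ! p) \<or> y = xs ! p) (take p xs @ xs ! p # drop (Suc p) xs)
      = take p xs @ [xs ! p]"
    using before after_not by (simp add: filter_empty_conv)
  then show "filter (\<lambda>y. r y (xs ! p) \<or> y = xs ! p) xs = take (Suc p) xs"
    using split p by (simp add: take_Suc_conv_app_nth)
qed

lemma length_filter_mono:
  "(\<And>x. P x \<Longrightarrow> Q x) \<Longrightarrow> length (filter P xs) \<le> length (filter Q xs)"
  by (induction xs) auto

lemma col_prec_irrefl: "\<not> col_prec \<alpha> \<alpha>"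
  by (auto simp: col_prec_def)

lemma col_prec_asym: "col_prec \<alpha> \<beta> \<Longrightarrow> \<not> col_prec \<beta> \<alpha>"
  by (auto simp: col_prec_def)

lemma rho_at_rho_after_chosen:
  assumes "sorted_wrt col_prec A" "p < length A"
  shows "rho_at R A (A ! p) = R ! p" and "rho_after R A (A ! p) = R ! Suc p"
  using filter_preceding_nth[OF assms col_prec_irrefl col_prec_asym] assms(2)
  by (simp_all add: rho_at_def rho_after_def)

lemma rho_after_unchosen: "\<alpha> \<notin> set A \<Longrightarrow> rho_after R A \<alpha> = rho_at R A \<alpha>"
  unfolding rho_after_def rho_at_def by (metis (mono_tags, lifting) filter_cong)

lemma added_row_eq: "adds_box_in_row rho sigma k \<Longrightarrow> added_row rho sigma = k"
  unfolding added_row_def by (rule the_equality) (auto simp: adds_box_in_row_def)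

lemma adds_box_added_row:
  "adds_box rho sigma \<Longrightarrow> rowlen sigma (added_row rho sigma) = rowlen rho (added_row rho sigma) + 1"
  unfolding adds_box_def using added_row_eq by (fastforce simp: adds_box_in_row_def)

lemma box_sequence_rowlen_mono:
  assumes "is_box_sequence R mu nu" "k \<le> k'" "k' < length R"
  shows "rowlen (R ! k) r \<le> rowlen (R ! k') r"
  using assms(2,3)
proof (induction k')
  case 0
  then show ?case by simp
next
  case (Suc k')
  have step: "rowlen (R ! k') r \<le> rowlen (R ! Suc k') r"
    using assms(1) Suc.prems(2)
    unfolding is_box_sequence_def adds_box_def adds_box_in_row_def by (metis le_add1 order_refl)
  show ?case
    using Suc step by (cases "k = Suc k'") auto
qed

lemma partition_rowlen_antimono:
  assumes "is_partition lam" "1 \<le> k" "k \<le> k'"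
  shows "rowlen lam k' \<le> rowlen lam k"
proof (cases "k' \<le> length lam")
  case True
  then show ?thesis
    using assms sorted_wrt_nth_less[of "(\<ge>)" lam "k - 1" "k' - 1"]
    unfolding is_partition_def rowlen_def by (cases "k = k'") auto
qed (simp add: rowlen_def)

lemma diagram_finite: "finite (diagram lam)"
proof -
  have "diagram lam \<subseteq> (SIGMA i:{1..length lam}. {1..rowlen lam i})"
    by (auto simp: diagram_def rowlen_def split: if_splits)
  then show ?thesis by (rule finite_subset) auto
qed

lemma collen_ge_row:
  assumes "is_partition nu" "1 \<le> j" "j \<le> rowlen nu t"
  shows "t \<le> collen nu j"
proof -
  have sub: "{1..t} \<subseteq> {i. (i, j) \<in> diagram nu}"
  proof
    fix k assume "k \<in> {1..t}"
    then have "1 \<le> k" "rowlen nu t \<le> rowlen nu k"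
      using partition_rowlen_antimono[OF assms(1)] by auto
    then show "k \<in> {i. (i, j) \<in> diagram nu}"
      using assms(2,3) by (simp add: diagram_def)
  qed
  have "{i. (i, j) \<in> diagram nu} \<subseteq> {..length nu}"
    using assms(2) by (auto simp: diagram_def rowlen_def split: if_splits)
  then have "finite {i. (i, j) \<in> diagram nu}"
    by (rule finite_subset) simp
  then show ?thesis
    unfolding collen_def using card_mono[OF _ sub] by simp
qed

lemma rho_at_partition:
  assumes "is_box_sequence R mu nu" "in_TT lam R T A"
  shows "is_partition (rho_at R A \<alpha>)"
  using assms unfolding is_box_sequence_def in_TT_def rho_at_def
  by (metis Suc_eq_plus1 le_imp_less_Suc length_filter_le nth_mem order.strict_trans1)

text \<open>Processing one box: if row T(alpha) of rho(alpha) reaches the content of alpha, then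
  afterwards it exceeds it -- a chosen box is added in exactly that row, and for an
  unchosen box equality is excluded by hypothesis.\<close>
lemma rho_after_exceeds_content:
  assumes seq: "is_box_sequence R mu nu" and TT: "in_TT lam R T A"
    and avoid: "\<alpha> \<notin> set A \<Longrightarrow> int (rowlen (rho_at R A \<alpha>) (T \<alpha>)) \<noteq> content \<alpha>"
    and before: "content \<alpha> \<le> int (rowlen (rho_at R A \<alpha>) (T \<alpha>))"
  shows "content \<alpha> + 1 \<le> int (rowlen (rho_after R A \<alpha>) (T \<alpha>))"
proof (cases "\<alpha> \<in> set A")
  case True
  then obtain p where p: "p < length A" "A ! p = \<alpha>"
    by (auto simp: in_set_conv_nth)
  have sorted: "sorted_wrt col_prec A" and lenA: "length A + 1 = length R"
    using TT by (auto simp: in_TT_def)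
  have barred: "\<forall>i. 1 \<le> i \<and> i \<le> length A \<longrightarrow> T (A ! (i - 1)) = seq_row R i"
    using TT by (simp add: in_TT_def)
  have "T (A ! (Suc p - 1)) = seq_row R (Suc p)"
    using spec[OF barred, of "Suc p"] p(1) by simp
  then have "T \<alpha> = added_row (R ! p) (R ! Suc p)"
    using p(2) by (simp add: seq_row_def)
  moreover have "adds_box (R ! p) (R ! Suc p)"
    using seq p(1) lenA by (simp add: is_box_sequence_def)
  ultimately have "rowlen (R ! Suc p) (T \<alpha>) = rowlen (R ! p) (T \<alpha>) + 1"
    using adds_box_added_row by simp
  then show ?thesis
    using before rho_at_rho_after_chosen[OF sorted p(1)] p(2) by simp
next
  case False
  then show ?thesis
    using avoid before rho_after_unchosen[OF False] by simp
qed

text \<open>Moving one column to the right: the diagram can only have grown and the entry can only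
  have decreased, so the bound obtained after (i,j) persists before (i,j+1), where the
  content is larger by one.\<close>
lemma rho_at_next_column:
  assumes seq: "is_box_sequence R mu nu" and TT: "in_TT lam R T A"
    and boxes: "(i, j) \<in> diagram lam" "(i, Suc j) \<in> diagram lam"
    and after: "content (i, j) + 1 \<le> int (rowlen (rho_after R A (i, j)) (T (i, j)))"
  shows "content (i, Suc j) \<le> int (rowlen (rho_at R A (i, Suc j)) (T (i, Suc j)))"
proof -
  have tab: "reverse_tableau lam T" and lenA: "length A + 1 = length R"
    using TT by (auto simp: in_TT_def)
  have entry_le: "T (i, Suc j) \<le> T (i, j)"
    using tab boxes unfolding reverse_tableau_def by blast
  have "0 < T (i, Suc j)"
    using tab boxes(2) unfolding reverse_tableau_def by blast
  then have entry_pos: "1 \<le> T (i, Suc j)"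
    by simp
  have later: "length (filter (\<lambda>\<beta>. col_prec \<beta> (i, j) \<or> \<beta> = (i, j)) A)
      \<le> length (filter (\<lambda>\<beta>. col_prec \<beta> (i, Suc j)) A)"
    by (rule length_filter_mono) (auto simp: col_prec_def)
  have in_range: "length (filter (\<lambda>\<beta>. col_prec \<beta> (i, Suc j)) A) < length R"
    using length_filter_le[of "\<lambda>\<beta>. col_prec \<beta> (i, Suc j)" A] lenA by linarith
  have "rowlen (rho_after R A (i, j)) (T (i, j)) \<le> rowlen (rho_at R A (i, Suc j)) (T (i, j))"
    unfolding rho_after_def rho_at_def by (rule box_sequence_rowlen_mono[OF seq later in_range])
  also have "\<dots> \<le> rowlen (rho_at R A (i, Suc j)) (T (i, Suc j))"
    using partition_rowlen_antimono[OF rho_at_partition[OF seq TT] entry_pos entry_le] .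
  finally show ?thesis
    using after by (simp add: content_def)
qed

lemma growth_invariant:
  assumes seq: "is_box_sequence R mu nu" and TT: "in_TT lam R T A"
    and avoid: "\<And>\<alpha>. \<alpha> \<in> diagram lam \<Longrightarrow> \<alpha> \<notin> set A \<Longrightarrow>
        int (rowlen (rho_at R A \<alpha>) (T \<alpha>)) \<noteq> content \<alpha>"
  shows "(i, j) \<in> diagram lam \<Longrightarrow> content (i, j) + 1 \<le> int (rowlen (rho_after R A (i, j)) (T (i, j)))"
proof (induction j)
  case 0
  then show ?case by (simp add: diagram_def)
next
  case (Suc j)
  have "content (i, Suc j) \<le> int (rowlen (rho_at R A (i, Suc j)) (T (i, Suc j)))"
  proof (cases "j = 0")
    case True
    then show ?thesis using Suc.prems by (simp add: content_def diagram_def)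
  next
    case False
    then have "(i, j) \<in> diagram lam"
      using Suc.prems by (simp add: diagram_def)
    then show ?thesis
      using rho_at_next_column[OF seq TT _ Suc.prems] Suc.IH by blast
  qed
  then show ?case
    using rho_after_exceeds_content[OF seq TT] avoid Suc.prems by blast
qed

lemma rho_after_rowlen_le_final:
  assumes seq: "is_box_sequence R mu nu" and TT: "in_TT lam R T A"
  shows "rowlen (rho_after R A \<alpha>) t \<le> rowlen nu t"
proof -
  have lenA: "length A + 1 = length R"
    using TT by (simp add: in_TT_def)
  have "R ! length A = nu"
    using seq lenA unfolding is_box_sequence_def by (metis add_diff_cancel_right' last_conv_nth)
  moreover have "rowlen (rho_after R A \<alpha>) t \<le> rowlen (R ! length A) t"
    unfolding rho_after_def
    by (rule box_sequence_rowlen_mono[OF seq length_filter_le]) (use lenA in simp)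
  ultimately show ?thesis
    by simp
qed

text \<open>A nonzero product of a_x - a_y over the unbarred boxes forces x \<noteq> y in each factor,
  i.e. row T(alpha) of rho(alpha) never ends exactly at the content of alpha.\<close>
lemma nonzero_product_avoids_content:
  fixes a :: "int \<Rightarrow> 'a::idom"
  assumes nonzero: "(\<Prod>\<alpha>\<in>{\<alpha>\<in>diagram lam. \<alpha> \<notin> set A}.
            a (int (T \<alpha>) - int (rowlen (rho_at R A \<alpha>) (T \<alpha>))) - a (int (T \<alpha>) - content \<alpha>)) \<noteq> 0"
    and box: "\<alpha> \<in> diagram lam" "\<alpha> \<notin> set A"
  shows "int (rowlen (rho_at R A \<alpha>) (T \<alpha>)) \<noteq> content \<alpha>"
proof
  assume "int (rowlen (rho_at R A \<alpha>) (T \<alpha>)) = content \<alpha>"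
  then have "a (int (T \<alpha>) - int (rowlen (rho_at R A \<alpha>) (T \<alpha>))) - a (int (T \<alpha>) - content \<alpha>) = 0"
    by simp
  moreover have "finite {\<alpha>\<in>diagram lam. \<alpha> \<notin> set A}"
    using diagram_finite[of lam] by simp
  ultimately show False
    using nonzero box prod_zero_iff by blast
qed

theorem lemma2p4:
  fixes a :: "int \<Rightarrow> 'a::idom"
  assumes "inj a"
    and "is_partition lam" and "is_partition mu" and "is_partition nu"
    and "is_box_sequence R mu nu"
    and "in_TT lam R T A"
    and "(\<Prod>\<alpha>\<in>{\<alpha>\<in>diagram lam. \<alpha> \<notin> set A}.
            a (int (T \<alpha>) - int (rowlen (rho_at R A \<alpha>) (T \<alpha>))) - a (int (T \<alpha>) - content \<alpha>)) \<noteq> 0"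
  shows "nu_bounded nu lam T"
  unfolding nu_bounded_def
proof (intro allI impI)
  fix j assume j: "1 \<le> j \<and> j \<le> rowlen lam 1"
  have avoid: "\<And>\<alpha>. \<alpha> \<in> diagram lam \<Longrightarrow> \<alpha> \<notin> set A \<Longrightarrow>
      int (rowlen (rho_at R A \<alpha>) (T \<alpha>)) \<noteq> content \<alpha>"
    using nonzero_product_avoids_content[OF assms(7)] .
  have "int j \<le> int (rowlen (rho_after R A (1, j)) (T (1, j)))"
    using growth_invariant[OF assms(5,6) avoid, of 1 j] j by (simp add: diagram_def content_def)
  also have "\<dots> \<le> int (rowlen nu (T (1, j)))"
    using rho_after_rowlen_le_final[OF assms(5,6)] by simp
  finally show "T (1, j) \<le> collen nu j"
    using collen_ge_row[OF assms(4)] j by simp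
qed

end
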